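(* Let $A$ be a right faithful Banach algebra. If $A^* = \langle A^*\triangle A^{**}\rangle$, then the norm of $A$ is equivalent on $A$ to its right multiplier norm $\|a\|_{r}=\sup_{\|x\|_A\le 1}\|xa\|_A$. Symmetrically, if $A$ is left faithful and $A^* = \langle A^{**}\square A^*\rangle$, then the norm of $A$ is equivalent to its left multiplier norm $\|a\|_{l}=\sup_{\|x\|_A\le 1}\|ax\|_A$.
   Context: Arens-type module actions: for a Banach algebra $A$, $a,b\in A$, $f\in A^*$, $m\in A^{**}$, define $f\square a\in A^*$ by $\langle f\square a,b\rangle=\langle f,ab\rangle$ and $m\square f\in A^*$ by $\langle m\square f,a\rangle=\langle m,f\square a\rangle$; define $a\triangle f\in A^*$ by $\langle a\triangle f,b\rangle=\langle f,ba\rangle$ and $f\triangle m\in A^*$ by $\langle f\triangle m,a\rangle=\langle m,a\triangle f\rangle$. $\langle A^*\triangle A^{**}\rangle$ denotes the linear span of $\{f\triangle m: f\in A^*, m\in A^{**}\}$, and similarly for $\langle A^{**}\square A^*\rangle$. $A$ is right faithful if $xa=0$ for all $x\in A$ implies $a=0$ (so that $a\mapsto$ right multiplication by $a$ embeds $A$ injectively into its right multiplier algebra, with norm $\|\cdot\|_r$); left faithful is defined symmetrically. *)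

theory Defs
  imports "HOL-Analysis.Analysis"
begin

(* Banach algebras: types of class real_normed_algebra + banach (real scalars, associative,
   submultiplicative norm, not necessarily unital). A* = 'a =>L real, A** = (A* =>L real). *)

definition sq_fa :: "('a::real_normed_algebra \<Rightarrow>\<^sub>L real) \<Rightarrow> 'a \<Rightarrow> ('a \<Rightarrow>\<^sub>L real)" where
  "sq_fa f a = Blinfun (\<lambda>b. blinfun_apply f (a * b))"

definition sq_mf :: "(('a::real_normed_algebra \<Rightarrow>\<^sub>L real) \<Rightarrow>\<^sub>L real) \<Rightarrow> ('a \<Rightarrow>\<^sub>L real) \<Rightarrow> ('a \<Rightarrow>\<^sub>L real)" where
  "sq_mf m f = Blinfun (\<lambda>a. blinfun_apply m (sq_fa f a))"

definition tr_af :: "'a::real_normed_algebra \<Rightarrow> ('a \<Rightarrow>\<^sub>L real) \<Rightarrow> ('a \<Rightarrow>\<^sub>L real)" where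
  "tr_af a f = Blinfun (\<lambda>b. blinfun_apply f (b * a))"

definition tr_fm :: "('a::real_normed_algebra \<Rightarrow>\<^sub>L real) \<Rightarrow> (('a \<Rightarrow>\<^sub>L real) \<Rightarrow>\<^sub>L real) \<Rightarrow> ('a \<Rightarrow>\<^sub>L real)" where
  "tr_fm f m = Blinfun (\<lambda>a. blinfun_apply m (tr_af a f))"

definition right_faithful :: "'a::real_normed_algebra itself \<Rightarrow> bool" where
  "right_faithful _ \<longleftrightarrow> (\<forall>a::'a. (\<forall>x. x * a = 0) \<longrightarrow> a = 0)"

definition left_faithful :: "'a::real_normed_algebra itself \<Rightarrow> bool" where
  "left_faithful _ \<longleftrightarrow> (\<forall>a::'a. (\<forall>x. a * x = 0) \<longrightarrow> a = 0)"

definition right_mult_norm :: "'a::real_normed_algebra \<Rightarrow> real" where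
  "right_mult_norm a = (SUP x\<in>{x. norm x \<le> 1}. norm (x * a))"

definition left_mult_norm :: "'a::real_normed_algebra \<Rightarrow> real" where
  "left_mult_norm a = (SUP x\<in>{x. norm x \<le> 1}. norm (a * x))"

definition norms_equivalent :: "('a \<Rightarrow> real) \<Rightarrow> ('a \<Rightarrow> real) \<Rightarrow> bool" where
  "norms_equivalent n1 n2 \<longleftrightarrow> (\<exists>c C. 0 < c \<and> 0 < C \<and> (\<forall>a. c * n1 a \<le> n2 a \<and> n2 a \<le> C * n1 a))"

end

theory Submission
  imports Defs
begin

text \<open>
  Let \<open>A\<close> be a Banach algebra whose dual \<open>A*\<close> is spanned by the functionals
  \<open>f \<triangle> m\<close>.  Each of them satisfies
  \<open>|(f \<triangle> m) a| \<le> norm m * norm f * norm (x \<mapsto> x * a)\<close>, and the functionals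
  dominated by a multiple of the right multiplier norm form a subspace; hence every functional in
  \<open>A*\<close> is so dominated.  Thus the unit ball of the right multiplier norm is weakly bounded,
  so by the uniform boundedness principle (on the complete space \<open>A*\<close>) together with
  norming functionals (Hahn-Banach) it is norm bounded, which is the nontrivial inequality.
\<close>

text \<open>Hahn-Banach in the form needed here: every vector is normed by a functional of norm at
  most one.  A candidate functional is encoded by its graph, a linear subspace of
  \<open>'a \<times> real\<close> lying below the graph of the norm.\<close>

definition norm_dominated_graph :: "('a::real_normed_vector \<times> real) set \<Rightarrow> bool" where
  "norm_dominated_graph G \<longleftrightarrow> subspace G \<and> (\<forall>(x, r)\<in>G. r \<le> norm x)"

lemma norm_dominated_graphD:
  assumes "norm_dominated_graph G"
  shows "subspace G" and "(x, r) \<in> G \<Longrightarrow> r \<le> norm x"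
  using assms by (auto simp: norm_dominated_graph_def)

text \<open>Such a graph is the graph of a partial function: two values over the same point differ by a
  value over \<open>0\<close>, which is at most \<open>norm 0 = 0\<close> in both directions.\<close>

lemma norm_dominated_graph_unique:
  assumes G: "norm_dominated_graph G" and "(x, r) \<in> G" "(x, s) \<in> G"
  shows "r = s"
proof -
  have sub: "subspace G" using G by (rule norm_dominated_graphD)
  have "(x, r) - (x, s) \<in> G" "(x, s) - (x, r) \<in> G"
    using subspace_diff[OF sub] assms(2,3) by blast+
  then have "r - s \<le> norm (0::'a)" "s - r \<le> norm (0::'a)"
    using norm_dominated_graphD(2)[OF G] by fastforce+
  then show ?thesis by simp
qed

lemma norm_dominated_graph_span_singleton:
  "norm_dominated_graph (span {(x0, norm x0)})"
  unfolding norm_dominated_graph_def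
proof
  show "subspace (span {(x0, norm x0)})" by (rule subspace_span)
  show "\<forall>(x, r)\<in>span {(x0, norm x0)}. r \<le> norm x"
    by (auto simp: span_singleton abs_mult intro!: mult_right_mono)
qed

text \<open>Nonempty chains have upper bounds (their unions), so Zorn's lemma applies.\<close>

lemma norm_dominated_graph_chain_Union:
  assumes C: "C \<noteq> {}" "subset.chain {G. norm_dominated_graph G \<and> p0 \<in> G} C"
  shows "norm_dominated_graph (\<Union>C) \<and> p0 \<in> \<Union>C"
proof -
  have mem: "\<And>G. G \<in> C \<Longrightarrow> norm_dominated_graph G \<and> p0 \<in> G"
    and cmp: "\<And>G H. G \<in> C \<Longrightarrow> H \<in> C \<Longrightarrow> G \<subseteq> H \<or> H \<subseteq> G"
    using C(2) unfolding subset.chain_def by blast+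
  have sub: "subspace G" if "G \<in> C" for G
    using mem[OF that] norm_dominated_graphD(1) by blast
  have "subspace (\<Union>C)"
    unfolding subspace_def
  proof (intro conjI ballI allI)
    show "0 \<in> \<Union>C" using C(1) sub subspace_0 by blast
  next
    fix p q assume "p \<in> \<Union>C" "q \<in> \<Union>C"
    then obtain G H where "G \<in> C" "H \<in> C" "p \<in> G" "q \<in> H" by blast
    with cmp[of G H] sub show "p + q \<in> \<Union>C"
      by (metis UnionI subsetD subspace_add)
  next
    fix c p assume "p \<in> \<Union>C"
    then show "c *\<^sub>R p \<in> \<Union>C" using sub subspace_scale by blast
  qed
  moreover have "\<forall>(x, r)\<in>\<Union>C. r \<le> norm x"
    using mem norm_dominated_graphD(2) by blast
  ultimately show ?thesis using C(1) mem by (auto simp: norm_dominated_graph_def)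
qed

text \<open>To add a point \<open>x1\<close> we need a value
  \<open>c\<close> separating the quantities \<open>s - norm (y - x1)\<close> from
  \<open>norm (z + x1) - u\<close>; the triangle inequality shows the former never exceed the latter.\<close>

lemma extension_constant_exists:
  assumes M: "norm_dominated_graph M"
  obtains c where "\<And>y s. (y, s) \<in> M \<Longrightarrow> s - norm (y - x1) \<le> c"
    and "\<And>z u. (z, u) \<in> M \<Longrightarrow> c \<le> norm (z + x1) - u"
proof -
  have sep: "s - norm (y - x1) \<le> norm (z + x1) - u" if "(y, s) \<in> M" "(z, u) \<in> M" for y s z u
  proof -
    have "(y + z, s + u) \<in> M"
      using subspace_add[OF norm_dominated_graphD(1)[OF M] that] by simp
    then have "s + u \<le> norm ((y - x1) + (z + x1))"
      using norm_dominated_graphD(2)[OF M] by simp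
    also have "\<dots> \<le> norm (y - x1) + norm (z + x1)" by (rule norm_triangle_ineq)
    finally show ?thesis by simp
  qed
  define L where "L = {s - norm (y - x1) | y s. (y, s) \<in> M}"
  have M0: "(0, 0) \<in> M"
    using subspace_0[OF norm_dominated_graphD(1)[OF M]] by (simp add: zero_prod_def)
  have "L \<noteq> {}" using M0 by (auto simp: L_def)
  moreover have "bdd_above L"
    unfolding bdd_above_def L_def using sep[OF _ M0] by blast
  ultimately show ?thesis
    using sep by (intro that[of "Sup L"] cSup_upper cSup_least) (auto simp: L_def)
qed

text \<open>With such a \<open>c\<close>, the extended functional stays below the norm:
  rescale by \<open>t\<close> and use the upper bound for \<open>t > 0\<close>, the lower one for \<open>t < 0\<close>.\<close>

lemma extension_inequality:
  assumes M: "norm_dominated_graph M" and ys: "(y, s) \<in> M"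
    and lower: "\<And>y s. (y, s) \<in> M \<Longrightarrow> s - norm (y - x1) \<le> c"
    and upper: "\<And>z u. (z, u) \<in> M \<Longrightarrow> c \<le> norm (z + x1) - u"
  shows "s + t * c \<le> norm (y + t *\<^sub>R x1)"
proof -
  have scaled: "(inverse \<tau> *\<^sub>R y, inverse \<tau> * s) \<in> M" for \<tau>
    using subspace_scale[OF norm_dominated_graphD(1)[OF M] ys, of "inverse \<tau>"] by simp
  consider "t > 0" | "t = 0" | "t < 0" by linarith
  then show ?thesis
  proof cases
    case 1
    have "t * c \<le> t * (norm (inverse t *\<^sub>R y + x1) - inverse t * s)"
      using upper[OF scaled] 1 by (intro mult_left_mono) auto
    also have "\<dots> = norm (t *\<^sub>R (inverse t *\<^sub>R y + x1)) - s"
      using 1 by (simp add: right_diff_distrib)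
    also have "t *\<^sub>R (inverse t *\<^sub>R y + x1) = y + t *\<^sub>R x1"
      using 1 by (simp add: scaleR_add_right)
    finally show ?thesis by simp
  next
    case 2
    then show ?thesis using norm_dominated_graphD(2)[OF M ys] by simp
  next
    case 3
    define \<tau> where "\<tau> = -t"
    have \<tau>: "\<tau> > 0" using 3 by (simp add: \<tau>_def)
    have "\<tau> *\<^sub>R (inverse \<tau> *\<^sub>R y - x1) = y - \<tau> *\<^sub>R x1"
      using \<tau> by (simp add: scaleR_diff_right)
    then have "norm (y - \<tau> *\<^sub>R x1) = \<tau> * norm (inverse \<tau> *\<^sub>R y - x1)"
      using \<tau> by (metis abs_of_pos norm_scaleR)
    moreover have "\<tau> * (inverse \<tau> * s - norm (inverse \<tau> *\<^sub>R y - x1)) \<le> \<tau> * c"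
      using lower[OF scaled] \<tau> by (intro mult_left_mono) auto
    ultimately have "s - norm (y - \<tau> *\<^sub>R x1) \<le> \<tau> * c"
      using \<tau> by (simp add: right_diff_distrib mult.assoc[symmetric])
    then show ?thesis by (simp add: \<tau>_def)
  qed
qed

lemma norm_dominated_graph_extend:
  assumes M: "norm_dominated_graph M"
  obtains c where "norm_dominated_graph (span (insert (x1, c) M))"
proof -
  obtain c where lower: "\<And>y s. (y, s) \<in> M \<Longrightarrow> s - norm (y - x1) \<le> c"
    and upper: "\<And>z u. (z, u) \<in> M \<Longrightarrow> c \<le> norm (z + x1) - u"
    using extension_constant_exists[OF M] by blast
  have span_M: "span M = M"
    using norm_dominated_graphD(1)[OF M] by (simp add: span_eq_iff)
  have "r \<le> norm x" if "(x, r) \<in> span (insert (x1, c) M)" for x r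
  proof -
    from that obtain t where "(x, r) - t *\<^sub>R (x1, c) \<in> M"
      unfolding span_insert span_M by blast
    then have "(x - t *\<^sub>R x1, r - t * c) \<in> M" by simp
    from extension_inequality[OF M this lower upper, of t] show ?thesis by simp
  qed
  then show ?thesis
    by (intro that) (auto simp: norm_dominated_graph_def subspace_span)
qed

lemma maximal_norm_dominated_graph:
  fixes p0 :: "'a::real_normed_vector \<times> real"
  assumes "norm_dominated_graph (span {p0})"
  obtains M where "norm_dominated_graph M" "p0 \<in> M"
    and "\<And>G. norm_dominated_graph G \<Longrightarrow> M \<subseteq> G \<Longrightarrow> G = M"
proof -
  let ?A = "{G. norm_dominated_graph G \<and> p0 \<in> G}"
  have "span {p0} \<in> ?A" using assms by (simp add: span_base)
  then have "\<exists>M\<in>?A. \<forall>G\<in>?A. M \<subseteq> G \<longrightarrow> G = M"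
    using norm_dominated_graph_chain_Union by (intro subset_Zorn_nonempty) blast+
  then show ?thesis using that by blast
qed

text \<open>A maximal graph is defined everywhere, since otherwise it could be extended.\<close>

lemma maximal_norm_dominated_graph_total:
  assumes M: "norm_dominated_graph M"
    and max: "\<And>G. norm_dominated_graph G \<Longrightarrow> M \<subseteq> G \<Longrightarrow> G = M"
  shows "\<exists>r. (x, r) \<in> M"
proof -
  obtain c where G: "norm_dominated_graph (span (insert (x, c) M))"
    using norm_dominated_graph_extend[OF M] by blast
  have "M \<subseteq> span (insert (x, c) M)" by (meson span_superset subset_insertI subset_trans)
  then have "span (insert (x, c) M) = M" by (rule max[OF G])
  then show ?thesis by (metis insertI1 span_base)
qed

text \<open>A total dominated graph is the graph of a linear functional of norm at most one
  (applying domination to \<open>-x\<close> bounds the functional from below as well).\<close>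

lemma functional_of_total_graph:
  assumes M: "norm_dominated_graph M" and total: "\<And>x. \<exists>r. (x, r) \<in> M"
  obtains g :: "'a::real_normed_vector \<Rightarrow>\<^sub>L real"
  where "norm g \<le> 1" and "\<And>x. (x, g x) \<in> M"
proof -
  define g where "g x = (SOME r. (x, r) \<in> M)" for x
  have gM: "(x, g x) \<in> M" for x unfolding g_def by (rule someI_ex, rule total)
  have sub: "subspace M" using M by (rule norm_dominated_graphD)
  have "(x + y, g x + g y) \<in> M" for x y using subspace_add[OF sub gM gM] by simp
  then have add: "g (x + y) = g x + g y" for x y
    using norm_dominated_graph_unique[OF M gM] by metis
  have "(r *\<^sub>R x, r * g x) \<in> M" for r x using subspace_scale[OF sub gM] by simp
  then have scale: "g (r *\<^sub>R x) = r * g x" for r x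
    using norm_dominated_graph_unique[OF M gM] by metis
  have bound: "\<bar>g x\<bar> \<le> norm x" for x
    using norm_dominated_graphD(2)[OF M gM[of x]] norm_dominated_graphD(2)[OF M gM[of "-x"]]
      scale[of "-1" x] by simp
  have bl: "bounded_linear g"
    by (rule bounded_linear_intro[of _ 1]) (use add scale bound in auto)
  show ?thesis
  proof
    show "norm (Blinfun g) \<le> 1"
      by (rule norm_blinfun_bound) (use bound bl in \<open>auto simp: bounded_linear_Blinfun_apply\<close>)
    show "(x, Blinfun g x) \<in> M" for x
      using gM by (simp add: bounded_linear_Blinfun_apply[OF bl])
  qed
qed

lemma norming_functional:
  fixes x0 :: "'a::real_normed_vector"
  obtains g :: "'a \<Rightarrow>\<^sub>L real" where "norm g \<le> 1" and "g x0 = norm x0"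
proof -
  obtain M where M: "norm_dominated_graph M" "(x0, norm x0) \<in> M"
    and max: "\<And>G. norm_dominated_graph G \<Longrightarrow> M \<subseteq> G \<Longrightarrow> G = M"
    using maximal_norm_dominated_graph[OF norm_dominated_graph_span_singleton] by blast
  obtain g :: "'a \<Rightarrow>\<^sub>L real" where "norm g \<le> 1" "\<And>x. (x, g x) \<in> M"
    using functional_of_total_graph[OF M(1) maximal_norm_dominated_graph_total[OF M(1) max]]
    by blast
  with norm_dominated_graph_unique[OF M] show ?thesis using that by metis
qed

lemma closed_cover_has_interior:
  fixes F :: "nat \<Rightarrow> 'a::complete_space set"
  assumes closed: "\<And>n. closed (F n)" and cover: "(\<Union>n. F n) = UNIV"
  shows "\<exists>n. interior (F n) \<noteq> {}"
proof (rule ccontr)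
  assume "\<nexists>n. interior (F n) \<noteq> {}"
  then have "Met_TC.mtopology interior_of (\<Union>n. F n) = {}"
    by (intro Met_TC.metric_Baire_category_alt) (use closed complete_UNIV in auto)
  then show False using cover by simp
qed

text \<open>Uniform boundedness on the dual \<open>'a \<Rightarrow>\<^sub>L real\<close>, which is always complete:
  a set of vectors on which every functional is bounded is bounded uniformly by all functionals
  of norm at most one.  Some set of functionals bounded by \<open>n\<close> contains a ball
  \<open>ball g0 r\<close>, and \<open>(r/2) h = (g0 + (r/2) h) - g0\<close>.\<close>

lemma uniform_boundedness_functionals:
  fixes S :: "'a::real_normed_vector set"
  assumes pointwise: "\<And>g::'a \<Rightarrow>\<^sub>L real. \<exists>C. \<forall>a\<in>S. \<bar>g a\<bar> \<le> C"
  shows "\<exists>K. \<forall>a\<in>S. \<forall>h::'a \<Rightarrow>\<^sub>L real. norm h \<le> 1 \<longrightarrow> \<bar>blinfun_apply h a\<bar> \<le> K"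
proof -
  define F where "F n = (\<Inter>a\<in>S. {g::'a \<Rightarrow>\<^sub>L real. \<bar>g a\<bar> \<le> real n})" for n :: nat
  have "closed (F n)" for n
    unfolding F_def by (intro closed_INT ballI closed_Collect_le continuous_intros)
  moreover have "(\<Union>n. F n) = UNIV"
  proof -
    have "g \<in> (\<Union>n. F n)" for g
    proof -
      obtain C where C: "\<forall>a\<in>S. \<bar>g a\<bar> \<le> C" using pointwise by blast
      obtain n :: nat where "C \<le> real n" using real_arch_simple by blast
      then have "g \<in> F n" using C by (auto simp: F_def)
      then show ?thesis by blast
    qed
    then show ?thesis by blast
  qed
  ultimately obtain n g0 where "g0 \<in> interior (F n)"
    using closed_cover_has_interior by blast
  then obtain r where r: "r > 0" "ball g0 r \<subseteq> F n"
    by (meson open_contains_ball open_interior interior_subset subset_trans)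
  have "\<bar>h a\<bar> \<le> 4 * real n / r" if a: "a \<in> S" and h: "norm h \<le> 1" for a and h :: "'a \<Rightarrow>\<^sub>L real"
  proof -
    have "g0 + (r/2) *\<^sub>R h \<in> F n" "g0 \<in> F n"
      using r h by (auto simp: dist_norm)
    then have "\<bar>g0 a + (r/2) * h a\<bar> \<le> real n" "\<bar>g0 a\<bar> \<le> real n"
      using a by (auto simp: F_def blinfun.add_left blinfun.scaleR_left)
    then have "(r/2) * \<bar>h a\<bar> \<le> 2 * real n"
      using r by (simp add: abs_mult)
    then show ?thesis using r by (simp add: field_simps)
  qed
  then show ?thesis by blast
qed

text \<open>Combined with norming functionals: weakly bounded sets are norm bounded.\<close>

lemma weakly_bounded_imp_bounded:
  fixes S :: "'a::real_normed_vector set"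
  assumes "\<And>g::'a \<Rightarrow>\<^sub>L real. \<exists>C. \<forall>a\<in>S. \<bar>g a\<bar> \<le> C"
  shows "\<exists>K. \<forall>a\<in>S. norm a \<le> K"
proof -
  obtain K where K: "\<And>a h. a \<in> S \<Longrightarrow> norm (h::'a \<Rightarrow>\<^sub>L real) \<le> 1 \<Longrightarrow> \<bar>h a\<bar> \<le> K"
    using uniform_boundedness_functionals[OF assms] by blast
  have "norm a \<le> K" if "a \<in> S" for a
  proof -
    obtain h :: "'a \<Rightarrow>\<^sub>L real" where "norm h \<le> 1" "h a = norm a"
      using norming_functional by blast
    then show ?thesis using K[OF that] by force
  qed
  then show ?thesis by blast
qed

text \<open>The
  set \<open>norm (T a) \<le> 1\<close> is weakly, hence norm, bounded; homogeneity then gives the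
  estimate, and a vector with \<open>T a = 0\<close> has all its multiples in that bounded set.\<close>

lemma bounded_below_if_functionals_dominated:
  fixes T :: "'a::real_normed_vector \<Rightarrow> 'b::real_normed_vector"
  assumes T: "linear T"
    and dominated: "\<And>g::'a \<Rightarrow>\<^sub>L real. \<exists>C. \<forall>a. \<bar>g a\<bar> \<le> C * norm (T a)"
  shows "\<exists>K>0. \<forall>a. norm a \<le> K * norm (T a)"
proof -
  let ?B = "{a. norm (T a) \<le> 1}"
  have "\<exists>C. \<forall>a\<in>?B. \<bar>g a\<bar> \<le> C" for g :: "'a \<Rightarrow>\<^sub>L real"
  proof -
    obtain C where C: "\<And>a. \<bar>g a\<bar> \<le> C * norm (T a)" using dominated by blast
    have "\<bar>g a\<bar> \<le> \<bar>C\<bar>" if "norm (T a) \<le> 1" for a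
    proof -
      have "C * norm (T a) \<le> \<bar>C\<bar> * norm (T a)" by (intro mult_right_mono) auto
      also have "\<dots> \<le> \<bar>C\<bar>" using that by (simp add: mult_left_le)
      finally show ?thesis using C[of a] by linarith
    qed
    then show ?thesis by blast
  qed
  then obtain K0 where K0: "\<And>a. norm (T a) \<le> 1 \<Longrightarrow> norm a \<le> K0"
    using weakly_bounded_imp_bounded[of ?B] by blast
  define K where "K = max K0 1"
  have "norm a \<le> K * norm (T a)" for a
  proof (cases "T a = 0")
    case True
    have multiples: "\<bar>c\<bar> * norm a \<le> K0" for c
      using K0[of "c *\<^sub>R a"] True by (simp add: linear_scale[OF T])
    have "norm a = 0"
    proof (rule ccontr)
      assume "norm a \<noteq> 0"
      then have "\<bar>(\<bar>K0\<bar> + 1) / norm a\<bar> * norm a = \<bar>K0\<bar> + 1" by simp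
      moreover have "\<bar>(\<bar>K0\<bar> + 1) / norm a\<bar> * norm a \<le> K0"
        by (rule multiples)
      ultimately show False by linarith
    qed
    then show ?thesis by (simp add: K_def)
  next
    case False
    let ?b = "inverse (norm (T a)) *\<^sub>R a"
    have "norm (T ?b) = 1" using False by (simp add: linear_scale[OF T])
    then have "norm ?b \<le> K0" by (intro K0) simp
    then have "norm a \<le> K0 * norm (T a)" using False by (simp add: field_simps)
    also have "\<dots> \<le> K * norm (T a)" by (intro mult_right_mono) (auto simp: K_def)
    finally show ?thesis .
  qed
  moreover have "K > 0" by (simp add: K_def)
  ultimately show ?thesis by blast
qed

text \<open>The functionals dominated by a multiple of a given function; they form a subspace, so it
  suffices to check domination on a spanning set.\<close>

definition dominated_functionals :: "('a::real_normed_vector \<Rightarrow> real) \<Rightarrow> ('a \<Rightarrow>\<^sub>L real) set" where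
  "dominated_functionals N = {g. \<exists>C. \<forall>a. \<bar>blinfun_apply g a\<bar> \<le> C * N a}"

lemma dominated_functionals_subspace: "subspace (dominated_functionals N)"
  unfolding subspace_def
proof (intro conjI ballI allI)
  show "0 \<in> dominated_functionals N"
    by (auto simp: dominated_functionals_def intro: exI[of _ 0])
next
  fix g h assume "g \<in> dominated_functionals N" "h \<in> dominated_functionals N"
  then obtain C D where C: "\<And>a. \<bar>g a\<bar> \<le> C * N a" and D: "\<And>a. \<bar>h a\<bar> \<le> D * N a"
    by (auto simp: dominated_functionals_def)
  have "\<bar>(g + h) a\<bar> \<le> (C + D) * N a" for a
    using abs_triangle_ineq[of "g a" "h a"] C[of a] D[of a]
    by (simp add: blinfun.add_left distrib_right)
  then show "g + h \<in> dominated_functionals N" by (auto simp: dominated_functionals_def)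
next
  fix c g assume "g \<in> dominated_functionals N"
  then obtain C where C: "\<And>a. \<bar>g a\<bar> \<le> C * N a" by (auto simp: dominated_functionals_def)
  have "\<bar>(c *\<^sub>R g) a\<bar> \<le> (\<bar>c\<bar> * C) * N a" for a
    using mult_left_mono[OF C[of a], of "\<bar>c\<bar>"]
    by (simp add: blinfun.scaleR_left abs_mult mult.assoc)
  then show "c *\<^sub>R g \<in> dominated_functionals N" by (auto simp: dominated_functionals_def)
qed

lemma norms_equivalent_if_span_dominated:
  fixes T :: "'a::real_normed_vector \<Rightarrow> 'b::real_normed_vector"
  assumes T: "linear T" and contraction: "\<And>a. norm (T a) \<le> norm a"
    and spanning: "(UNIV :: ('a \<Rightarrow>\<^sub>L real) set) = span S"
    and dominated: "S \<subseteq> dominated_functionals (\<lambda>a. norm (T a))"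
  shows "norms_equivalent norm (\<lambda>a. norm (T a))"
proof -
  have "span S \<subseteq> dominated_functionals (\<lambda>a. norm (T a))"
    by (rule span_minimal[OF dominated dominated_functionals_subspace])
  then have "\<exists>C. \<forall>a. \<bar>g a\<bar> \<le> C * norm (T a)" for g :: "'a \<Rightarrow>\<^sub>L real"
    using spanning by (auto simp: dominated_functionals_def)
  then obtain K where "K > 0" "\<And>a. norm a \<le> K * norm (T a)"
    using bounded_below_if_functionals_dominated[OF T] by blast
  then show ?thesis unfolding norms_equivalent_def
    using contraction by (intro exI[of _ "inverse K"] exI[of _ 1]) (auto simp: field_simps)
qed

lemma Sup_unit_ball_eq_norm_blinfun:
  fixes f :: "'a::real_normed_vector \<Rightarrow>\<^sub>L 'b::real_normed_vector"
  shows "(SUP x\<in>{x. norm x \<le> 1}. norm (f x)) = norm f"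
proof (rule antisym)
  have ball_bound: "norm (f x) \<le> norm f" if "norm x \<le> 1" for x
    using norm_blinfun[of f x] that mult_left_le[of "norm x" "norm f"] by simp
  then show "(SUP x\<in>{x. norm x \<le> 1}. norm (f x)) \<le> norm f"
    by (intro cSUP_least) (auto intro: exI[of _ 0])
  let ?S = "SUP x\<in>{x. norm x \<le> 1}. norm (f x)"
  have bdd: "bdd_above ((\<lambda>x. norm (f x)) ` {x. norm x \<le> 1})"
    using ball_bound by (intro bdd_aboveI2) auto
  have upper: "norm (f x) \<le> ?S" if "norm x \<le> 1" for x
    using that by (intro cSUP_upper[OF _ bdd]) simp
  show "norm f \<le> ?S"
  proof (rule norm_blinfun_bound)
    show "0 \<le> ?S" using upper[of 0] by simp
    show "norm (f x) \<le> ?S * norm x" for x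
    proof (cases "x = 0")
      case False
      have "norm (f (inverse (norm x) *\<^sub>R x)) \<le> ?S" by (intro upper) (simp add: False)
      then show ?thesis using False by (simp add: blinfun.scaleR_right field_simps)
    qed simp
  qed
qed

lemma right_mult_norm_eq: "right_mult_norm a = norm (blinfun_mult_left a)"
  unfolding right_mult_norm_def by (simp flip: Sup_unit_ball_eq_norm_blinfun)

lemma left_mult_norm_eq: "left_mult_norm a = norm (blinfun_mult_right a)"
  unfolding left_mult_norm_def by (simp flip: Sup_unit_ball_eq_norm_blinfun)

lemma norm_blinfun_mult_left_le: "norm (blinfun_mult_left a) \<le> norm (a::'a::real_normed_algebra)"
  by (rule norm_blinfun_bound) (auto simp: norm_mult_ineq mult.commute)

lemma norm_blinfun_mult_right_le: "norm (blinfun_mult_right a) \<le> norm (a::'a::real_normed_algebra)"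
  by (rule norm_blinfun_bound) (auto simp: norm_mult_ineq)

lemma tr_af_eq_compose: "tr_af a f = f o\<^sub>L blinfun_mult_left a"
proof -
  have "(\<lambda>b. f (b * a)) = blinfun_apply (f o\<^sub>L blinfun_mult_left a)" by auto
  then show ?thesis by (simp add: tr_af_def blinfun_apply_inverse)
qed

lemma sq_fa_eq_compose: "sq_fa f a = f o\<^sub>L blinfun_mult_right a"
proof -
  have "(\<lambda>b. f (a * b)) = blinfun_apply (f o\<^sub>L blinfun_mult_right a)" by auto
  then show ?thesis by (simp add: sq_fa_def blinfun_apply_inverse)
qed

lemma tr_fm_apply: "tr_fm f m a = m (f o\<^sub>L blinfun_mult_left a)"
proof -
  have "bounded_linear (\<lambda>a. m (f o\<^sub>L blinfun_mult_left a))"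
    by (intro bounded_linear_compose[OF blinfun.bounded_linear_right]
        bounded_linear_compose[OF bounded_bilinear.bounded_linear_right[OF bounded_bilinear_blinfun_compose]]
        bounded_linear_blinfun_mult_left)
  then show ?thesis by (simp add: tr_fm_def tr_af_eq_compose bounded_linear_Blinfun_apply)
qed

lemma sq_mf_apply: "sq_mf m f a = m (f o\<^sub>L blinfun_mult_right a)"
proof -
  have "bounded_linear (\<lambda>a. m (f o\<^sub>L blinfun_mult_right a))"
    by (intro bounded_linear_compose[OF blinfun.bounded_linear_right]
        bounded_linear_compose[OF bounded_bilinear.bounded_linear_right[OF bounded_bilinear_blinfun_compose]]
        bounded_linear_blinfun_mult_right)
  then show ?thesis by (simp add: sq_mf_def sq_fa_eq_compose bounded_linear_Blinfun_apply)
qed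

lemma abs_apply_compose_le:
  fixes L :: "'a \<Rightarrow> 'b::real_normed_vector \<Rightarrow>\<^sub>L 'c::real_normed_vector"
    and f :: "'c \<Rightarrow>\<^sub>L 'd::real_normed_vector" and m :: "('b \<Rightarrow>\<^sub>L 'd) \<Rightarrow>\<^sub>L real"
  shows "\<bar>m (f o\<^sub>L L a)\<bar> \<le> (norm m * norm f) * norm (L a)"
proof -
  have "\<bar>m (f o\<^sub>L L a)\<bar> \<le> norm m * norm (f o\<^sub>L L a)" using norm_blinfun[of m] by simp
  also have "\<dots> \<le> norm m * (norm f * norm (L a))"
    by (intro mult_left_mono norm_blinfun_compose) simp
  finally show ?thesis by (simp add: mult.assoc)
qed

lemma tr_fm_dominated: "tr_fm f m \<in> dominated_functionals (\<lambda>a. norm (blinfun_mult_left a))"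
  unfolding dominated_functionals_def
  using abs_apply_compose_le[of m f blinfun_mult_left]
  by (auto simp: tr_fm_apply)

lemma sq_mf_dominated: "sq_mf m f \<in> dominated_functionals (\<lambda>a. norm (blinfun_mult_right a))"
  unfolding dominated_functionals_def
  using abs_apply_compose_le[of m f blinfun_mult_right]
  by (auto simp: sq_mf_apply)

theorem corollary1:
  shows "(right_faithful TYPE('a::{real_normed_algebra,banach}) \<and>
           (UNIV :: ('a \<Rightarrow>\<^sub>L real) set) = span {tr_fm (f :: 'a \<Rightarrow>\<^sub>L real) m | f m. True}
           \<longrightarrow> norms_equivalent (norm :: 'a \<Rightarrow> real) right_mult_norm) \<and>
         (left_faithful TYPE('a) \<and>
           (UNIV :: ('a \<Rightarrow>\<^sub>L real) set) = span {sq_mf m (f :: 'a \<Rightarrow>\<^sub>L real) | m f. True}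
           \<longrightarrow> norms_equivalent (norm :: 'a \<Rightarrow> real) left_mult_norm)"
proof (intro conjI impI)
  assume "right_faithful TYPE('a) \<and>
    (UNIV :: ('a \<Rightarrow>\<^sub>L real) set) = span {tr_fm (f :: 'a \<Rightarrow>\<^sub>L real) m | f m. True}"
  then have "norms_equivalent norm (\<lambda>a::'a. norm (blinfun_mult_left a))"
    by (intro norms_equivalent_if_span_dominated bounded_linear.linear
        bounded_linear_blinfun_mult_left norm_blinfun_mult_left_le) (auto intro: tr_fm_dominated)
  then show "norms_equivalent (norm :: 'a \<Rightarrow> real) right_mult_norm"
    by (simp add: right_mult_norm_eq[abs_def])
next
  assume "left_faithful TYPE('a) \<and>
    (UNIV :: ('a \<Rightarrow>\<^sub>L real) set) = span {sq_mf m (f :: 'a \<Rightarrow>\<^sub>L real) | m f. True}"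
  then have "norms_equivalent norm (\<lambda>a::'a. norm (blinfun_mult_right a))"
    by (intro norms_equivalent_if_span_dominated bounded_linear.linear
        bounded_linear_blinfun_mult_right norm_blinfun_mult_right_le) (auto intro: sq_mf_dominated)
  then show "norms_equivalent (norm :: 'a \<Rightarrow> real) left_mult_norm"
    by (simp add: left_mult_norm_eq[abs_def])
qed

end
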